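(* Let $\mathcal{G}\subseteq\mathbb{N}$ be a finite set with $0\in\mathcal{G}$, let $\lambda\in\mathbb{N}$, let $L=\max\mathcal{G}+\lambda$, and let $\mathcal{D}=\mathcal{G}\cup(\max\mathcal{G}-\mathcal{G}+\lambda)$. Then the following are equivalent: (i) $\mathcal{D}+\mathcal{D}=\{0,1,\ldots,2L\}$; (ii) $\mathcal{D}-\mathcal{D}=\{-L,\ldots,L\}$; (iii) both of the following conditions hold: (C1) $(\mathcal{G}-\mathcal{G})\cup(\mathcal{G}+\mathcal{G}-L)\cup(L-(\mathcal{G}+\mathcal{G}))\supseteq\{0,1,\ldots,\max\mathcal{G}\}$; (C2) $\mathcal{G}+\mathcal{G}\supseteq\{0,1,\ldots,\lambda-1\}$ (vacuous if $\lambda=0$).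
   Context: For sets $\mathcal{A},\mathcal{B}\subseteq\mathbb{Z}$ and $c\in\mathbb{Z}$: $\mathcal{A}+\mathcal{B}=\{a+b: a\in\mathcal{A},b\in\mathcal{B}\}$, $\mathcal{A}-\mathcal{B}=\{a-b\}$, $\mathcal{A}+c=\{a+c\}$, $c-\mathcal{A}=\{c-a\}$. The set $\mathcal{D}=\mathcal{G}\cup(\max\mathcal{G}-\mathcal{G}+\lambda)$ is called the symmetric array with generator $\mathcal{G}$ and shift $\lambda$ (S-$\mathcal{G}$); its aperture is $\max\mathcal{D}=L=\max\mathcal{G}+\lambda$. *)

theory Defs
  imports Main
begin

definition sumset :: "int set \<Rightarrow> int set \<Rightarrow> int set" where
  "sumset A B = {a + b | a b. a \<in> A \<and> b \<in> B}"

definition diffset :: "int set \<Rightarrow> int set \<Rightarrow> int set" where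
  "diffset A B = {a - b | a b. a \<in> A \<and> b \<in> B}"

definition shiftset :: "int set \<Rightarrow> int \<Rightarrow> int set" where
  "shiftset A c = {a + c | a. a \<in> A}"

definition reflset :: "int \<Rightarrow> int set \<Rightarrow> int set" where
  "reflset c A = {c - a | a. a \<in> A}"

definition symarray :: "int set \<Rightarrow> int \<Rightarrow> int set" where
  "symarray G lam = G \<union> shiftset (reflset (Max G) G) lam"

end

theory Submission
  imports Defs
begin

text \<open>Because \<open>D\<close> is invariant under \<open>y \<mapsto> L - y\<close>, every sum \<open>a + b\<close> of elements of \<open>D\<close> is the
  difference \<open>a - (L - b)\<close> shifted by \<open>L\<close>, so \<open>D + D = (D - D) + L\<close> and (i) \<open>\<longleftrightarrow>\<close> (ii).
  Writing \<open>D = G \<union> (L - G)\<close>, the difference set \<open>D - D\<close> is exactly the set appearing in (C1);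
  it is symmetric and lies in \<open>[-L, L]\<close>, so (ii) amounts to \<open>[0, L] \<subseteq> D - D\<close>. On \<open>[0, Max G]\<close> this
  is (C1); a point \<open>x > Max G\<close> cannot be a difference or a shifted sum of elements of \<open>G\<close>,
  so it is covered iff \<open>L - x \<in> G + G\<close>, which for \<open>x \<in> (Max G, L]\<close> is (C2).\<close>

lemma mem_sumset: "x \<in> sumset A B \<longleftrightarrow> (\<exists>a\<in>A. \<exists>b\<in>B. x = a + b)"
  unfolding sumset_def by blast

lemma mem_diffset: "x \<in> diffset A B \<longleftrightarrow> (\<exists>a\<in>A. \<exists>b\<in>B. x = a - b)"
  unfolding diffset_def by blast

lemma mem_shiftset: "x \<in> shiftset A c \<longleftrightarrow> x - c \<in> A"
  unfolding shiftset_def by force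

lemma mem_reflset: "x \<in> reflset c A \<longleftrightarrow> c - x \<in> A"
  unfolding reflset_def by force

lemma mem_sumset_iff_mem_diffset_if_reflective:
  assumes refl: "\<And>y. y \<in> D \<longleftrightarrow> L - y \<in> D"
  shows "x \<in> sumset D D \<longleftrightarrow> x - L \<in> diffset D D"
proof
  assume "x \<in> sumset D D"
  then obtain a b where "a \<in> D" "b \<in> D" "x = a + b" unfolding mem_sumset by blast
  then show "x - L \<in> diffset D D"
    unfolding mem_diffset using refl[of b] by (intro bexI[of _ a] bexI[of _ "L - b"]) auto
next
  assume "x - L \<in> diffset D D"
  then obtain a b where "a \<in> D" "b \<in> D" "x - L = a - b" unfolding mem_diffset by blast
  then show "x \<in> sumset D D"
    unfolding mem_sumset using refl[of b] by (intro bexI[of _ a] bexI[of _ "L - b"]) auto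
qed

lemma sumset_eq_interval_iff_diffset_eq_interval:
  assumes "\<And>y. y \<in> D \<longleftrightarrow> L - y \<in> D"
  shows "sumset D D = {0..2*L} \<longleftrightarrow> diffset D D = {-L..L}"
proof
  assume sums: "sumset D D = {0..2*L}"
  show "diffset D D = {-L..L}"
  proof (rule set_eqI)
    fix y
    show "y \<in> diffset D D \<longleftrightarrow> y \<in> {-L..L}"
      using mem_sumset_iff_mem_diffset_if_reflective[OF assms, of "y + L"] sums by auto
  qed
next
  assume "diffset D D = {-L..L}"
  then show "sumset D D = {0..2*L}"
    using mem_sumset_iff_mem_diffset_if_reflective[OF assms] by auto
qed

lemma symarray_eq_union_reflset: "symarray G lam = G \<union> reflset (Max G + lam) G"
  unfolding symarray_def by (auto simp: mem_shiftset mem_reflset algebra_simps)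

lemma mem_union_reflset_iff: "L - y \<in> G \<union> reflset L G \<longleftrightarrow> y \<in> G \<union> reflset L G"
  by (auto simp: mem_reflset)

definition sym_coarray :: "int set \<Rightarrow> int \<Rightarrow> int set" where
  "sym_coarray G L = diffset G G \<union> shiftset (sumset G G) (-L) \<union> reflset L (sumset G G)"

lemma mem_sym_coarray:
  "x \<in> sym_coarray G L \<longleftrightarrow> (\<exists>a\<in>G. \<exists>b\<in>G. x = a - b \<or> x = a + b - L \<or> x = L - (a + b))"
  unfolding sym_coarray_def Un_iff mem_diffset mem_shiftset mem_reflset mem_sumset
  by (auto simp: algebra_simps)

lemma diffset_union_reflset: "diffset (G \<union> reflset L G) (G \<union> reflset L G) = sym_coarray G L"
proof (rule set_eqI)
  fix x
  show "x \<in> diffset (G \<union> reflset L G) (G \<union> reflset L G) \<longleftrightarrow> x \<in> sym_coarray G L"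
  proof
    assume "x \<in> diffset (G \<union> reflset L G) (G \<union> reflset L G)"
    then obtain a b where "a \<in> G \<union> reflset L G" "b \<in> G \<union> reflset L G" and x: "x = a - b"
      unfolding mem_diffset by blast
    then have "a \<in> G \<or> L - a \<in> G" and "b \<in> G \<or> L - b \<in> G"
      by (simp_all add: mem_reflset)
    then show "x \<in> sym_coarray G L"
    proof (elim disjE)
      assume "a \<in> G" "b \<in> G"
      with x show ?thesis unfolding mem_sym_coarray by blast
    next
      assume "a \<in> G" "L - b \<in> G"
      moreover have "x = a + (L - b) - L" using x by simp
      ultimately show ?thesis unfolding mem_sym_coarray by blast
    next
      assume "L - a \<in> G" "b \<in> G"
      moreover have "x = L - ((L - a) + b)" using x by simp
      ultimately show ?thesis unfolding mem_sym_coarray by blast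
    next
      assume "L - a \<in> G" "L - b \<in> G"
      moreover have "x = (L - b) - (L - a)" using x by simp
      ultimately show ?thesis unfolding mem_sym_coarray by blast
    qed
  next
    assume "x \<in> sym_coarray G L"
    then obtain a b where ab: "a \<in> G" "b \<in> G" and x: "x = a - b \<or> x = a + b - L \<or> x = L - (a + b)"
      unfolding mem_sym_coarray by blast
    have refl: "L - a \<in> G \<union> reflset L G" "L - b \<in> G \<union> reflset L G"
      using ab by (simp_all add: mem_reflset)
    from x show "x \<in> diffset (G \<union> reflset L G) (G \<union> reflset L G)"
    proof (elim disjE)
      assume "x = a - b"
      with ab show ?thesis unfolding mem_diffset by blast
    next
      assume "x = a + b - L"
      then have "x = a - (L - b)" by simp
      with ab refl show ?thesis unfolding mem_diffset by blast
    next
      assume "x = L - (a + b)"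
      then have "x = (L - a) - b" by simp
      with ab refl show ?thesis unfolding mem_diffset by blast
    qed
  qed
qed

lemma uminus_mem_sym_coarray:
  assumes "x \<in> sym_coarray G L"
  shows "-x \<in> sym_coarray G L"
proof -
  obtain a b where "a \<in> G" "b \<in> G" and "x = a - b \<or> x = a + b - L \<or> x = L - (a + b)"
    using assms unfolding mem_sym_coarray by blast
  then have "-x = b - a \<or> -x = L - (a + b) \<or> -x = a + b - L" by auto
  with \<open>a \<in> G\<close> \<open>b \<in> G\<close> show ?thesis unfolding mem_sym_coarray by blast
qed

lemma sym_coarray_subset_interval:
  assumes "G \<subseteq> {0..L}"
  shows "sym_coarray G L \<subseteq> {-L..L}"
proof
  fix x assume "x \<in> sym_coarray G L"
  then obtain a b where ab: "a \<in> G" "b \<in> G" "x = a - b \<or> x = a + b - L \<or> x = L - (a + b)"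
    unfolding mem_sym_coarray by blast
  have "0 \<le> a" "a \<le> L" "0 \<le> b" "b \<le> L" using assms ab(1,2) by auto
  with ab(3) show "x \<in> {-L..L}" by auto
qed

lemma symmetric_subset_eq_interval_iff:
  fixes S :: "int set"
  assumes "S \<subseteq> {-L..L}" and "\<And>x. x \<in> S \<Longrightarrow> -x \<in> S"
  shows "S = {-L..L} \<longleftrightarrow> {0..L} \<subseteq> S"
proof
  assume "{0..L} \<subseteq> S"
  have "x \<in> S" if "x \<in> {-L..L}" for x
  proof (cases "0 \<le> x")
    case False
    then have "-x \<in> S" using that \<open>{0..L} \<subseteq> S\<close> by auto
    then show ?thesis using assms(2)[of "-x"] by simp
  qed (use that \<open>{0..L} \<subseteq> S\<close> in auto)
  then have "{-L..L} \<subseteq> S" by blast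
  with assms(1) show "S = {-L..L}" by blast
qed auto

lemma mem_sym_coarray_above_bound:
  assumes G: "G \<subseteq> {0..M}" and "M \<le> L" and "M < x"
  shows "x \<in> sym_coarray G L \<longleftrightarrow> L - x \<in> sumset G G"
proof
  assume "x \<in> sym_coarray G L"
  then obtain a b where ab: "a \<in> G" "b \<in> G" "x = a - b \<or> x = a + b - L \<or> x = L - (a + b)"
    unfolding mem_sym_coarray by blast
  have "a \<le> M" "b \<le> M" "0 \<le> b" using ab(1,2) G by auto
  then have "a - b < x" "a + b - L < x" using assms(2,3) by auto
  with ab(3) have "L - x = a + b" by auto
  with ab(1,2) show "L - x \<in> sumset G G" unfolding mem_sumset by blast
next
  assume "L - x \<in> sumset G G"
  then obtain a b where "a \<in> G" "b \<in> G" "L - x = a + b" unfolding mem_sumset by blast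
  then show "x \<in> sym_coarray G L" unfolding mem_sym_coarray by (auto simp: algebra_simps)
qed

lemma interval_subset_sym_coarray_iff:
  assumes G: "G \<subseteq> {0..M}" and "0 \<le> M" and "0 \<le> lam"
  shows "{0..M + lam} \<subseteq> sym_coarray G (M + lam)
    \<longleftrightarrow> {0..M} \<subseteq> sym_coarray G (M + lam) \<and> {0..lam - 1} \<subseteq> sumset G G"
    (is "?all \<longleftrightarrow> ?low \<and> ?high")
proof -
  let ?L = "M + lam"
  have above: "?L - k \<in> sym_coarray G ?L \<longleftrightarrow> k \<in> sumset G G" if "k \<le> lam - 1" for k
    using mem_sym_coarray_above_bound[OF G, of ?L "?L - k"] that assms by simp
  have "?all \<Longrightarrow> ?high"
  proof
    fix k assume "?all" "k \<in> {0..lam - 1}"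
    then have "?L - k \<in> sym_coarray G ?L" using assms by auto
    with above show "k \<in> sumset G G" using \<open>k \<in> {0..lam - 1}\<close> by simp
  qed
  moreover have "?all" if ?low ?high
  proof
    fix x assume x: "x \<in> {0..?L}"
    show "x \<in> sym_coarray G ?L"
    proof (cases "x \<le> M")
      case False
      then have "?L - x \<in> sumset G G" using \<open>?high\<close> x by auto
      then show ?thesis using above[of "?L - x"] False by simp
    qed (use \<open>?low\<close> x in auto)
  qed
  moreover have "?all \<Longrightarrow> ?low" using assms by auto
  ultimately show ?thesis by blast
qed

theorem mainTheorem3:
  fixes G :: "int set" and lam :: int
  assumes "finite G" and "0 \<in> G" and "\<forall>g\<in>G. 0 \<le> g" and "0 \<le> lam"
  defines "L \<equiv> Max G + lam"
  defines "D \<equiv> symarray G lam"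
  shows "(sumset D D = {0..2*L} \<longleftrightarrow> diffset D D = {-L..L})
    \<and> (diffset D D = {-L..L} \<longleftrightarrow>
        (diffset G G \<union> shiftset (sumset G G) (-L) \<union> reflset L (sumset G G) \<supseteq> {0..Max G}
         \<and> sumset G G \<supseteq> {0..lam - 1}))"
proof -
  have G: "G \<subseteq> {0..Max G}" using assms(1,3) by auto
  have "0 \<le> Max G" using assms(1,2) by simp
  have D: "D = G \<union> reflset L G"
    unfolding D_def L_def by (rule symarray_eq_union_reflset)
  have "sumset D D = {0..2*L} \<longleftrightarrow> diffset D D = {-L..L}"
    unfolding D using mem_union_reflset_iff
    by (intro sumset_eq_interval_iff_diffset_eq_interval) blast
  moreover have "diffset D D = {-L..L} \<longleftrightarrow> {0..L} \<subseteq> sym_coarray G L"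
    unfolding D diffset_union_reflset using G assms(4)
    by (intro symmetric_subset_eq_interval_iff sym_coarray_subset_interval uminus_mem_sym_coarray)
      (auto simp: L_def)
  moreover have "{0..L} \<subseteq> sym_coarray G L
      \<longleftrightarrow> {0..Max G} \<subseteq> sym_coarray G L \<and> {0..lam - 1} \<subseteq> sumset G G"
    unfolding L_def using interval_subset_sym_coarray_iff[OF G \<open>0 \<le> Max G\<close> assms(4)] .
  ultimately show ?thesis unfolding sym_coarray_def by simp
qed

end
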